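(* For each integer $N\ge1$, write $N=4m+k$ with $m\in\mathbb{N}$, $k\in\{0,1,2,3\}$, let $\alpha=((k+1)\bmod 4)-1$, and set $N_1^\star=(N-\alpha)/4$, $N_2^\star=(N+\alpha)/2$. Then $N_1^\star,N_2^\star$ are integers with $N_1^\star\ge0$, $N_2^\star\ge1$, the array $\mathbb{S}^\star(N)\triangleq\mathbb{D}_{\mathrm{CNA}}(N_1^\star,N_2^\star)$ has exactly $N$ elements, its sum set is $\mathbb{S}^\star(N)+\mathbb{S}^\star(N)=[0:2\max\mathbb{S}^\star(N)]$ with $$|\mathbb{S}^\star(N)+\mathbb{S}^\star(N)|=\frac{N^2+6N-7}{4}-\frac{(\alpha-1)^2}{4}+1,$$ and the redundancy $R(N)\triangleq\dfrac{N(N+1)}{2\,|\mathbb{S}^\star(N)+\mathbb{S}^\star(N)|}$ satisfies $\lim_{N\to\infty}R(N)=2$.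
   Context: For $N_1\in\mathbb{N}$, $N_2\ge1$: $\mathbb{D}_1=[0:N_1-1]$, $\mathbb{D}_2=\{j(N_1+1): j\in[0:N_2-1]\}$, and $\mathbb{D}_{\mathrm{CNA}}(N_1,N_2)=\mathbb{D}_1\cup(\mathbb{D}_2+N_1)\cup(\mathbb{D}_1+(N_1+1)N_2)\subset\mathbb{N}$. Sum set $\mathbb{A}+\mathbb{B}=\{a+b:a\in\mathbb{A},b\in\mathbb{B}\}$, shift $\mathbb{A}+c=\{a+c\}$, $[a:b]=\{c\in\mathbb{Z}:a\le c\le b\}$. *)

theory Defs
  imports Complex_Main
begin

definition sumset :: "nat set \<Rightarrow> nat set \<Rightarrow> nat set" where
  "sumset A B = {a + b | a b. a \<in> A \<and> b \<in> B}"

definition D1 :: "nat \<Rightarrow> nat set" where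
  "D1 N1 = {..<N1}"

definition D2 :: "nat \<Rightarrow> nat \<Rightarrow> nat set" where
  "D2 N1 N2 = {j * (N1 + 1) | j. j < N2}"

definition D_CNA :: "nat \<Rightarrow> nat \<Rightarrow> nat set" where
  "D_CNA N1 N2 = D1 N1 \<union> ((\<lambda>x. x + N1) ` D2 N1 N2) \<union> ((\<lambda>x. x + (N1 + 1) * N2) ` D1 N1)"

definition alpha :: "nat \<Rightarrow> int" where
  "alpha N = ((int (N mod 4) + 1) mod 4) - 1"

definition N1star :: "nat \<Rightarrow> int" where
  "N1star N = (int N - alpha N) div 4"

definition N2star :: "nat \<Rightarrow> int" where
  "N2star N = (int N + alpha N) div 2"

definition Sstar :: "nat \<Rightarrow> nat set" where
  "Sstar N = D_CNA (nat (N1star N)) (nat (N2star N))"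

definition redundancy :: "nat \<Rightarrow> real" where
  "redundancy N = real (N * (N + 1)) / (2 * real (card (sumset (Sstar N) (Sstar N))))"

end

theory Submission
  imports Defs "HOL-Real_Asymp.Real_Asymp"
begin

text \<open>
  Put \<open>M = (N1 + 1) * N2 + N1 - 1\<close>, the largest element of \<open>S = D_CNA N1 N2\<close>.
  The set \<open>S\<close> contains \<open>[0:N1]\<close> and its gaps are at most \<open>N1 + 1\<close>, so \<open>S + [0:N1]\<close>
  already covers \<open>[0:M]\<close>; and \<open>S\<close> is invariant under \<open>x \<mapsto> M - x\<close>, which carries this
  over to \<open>[M:2M]\<close>. Hence \<open>S + S = [0:2M]\<close> has \<open>2(N1 + 1)N2 + 2N1 - 1\<close> elements.
  For the parameters \<open>N1\<^sup>\<star>, N2\<^sup>\<star>\<close> one has \<open>N = 2N1\<^sup>\<star> + N2\<^sup>\<star>\<close> and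
  \<open>\<alpha> = N2\<^sup>\<star> - 2N1\<^sup>\<star>\<close>, which turns this count into the closed form; as \<open>\<alpha>\<close> stays
  in \<open>[-1:2]\<close>, the sum set has \<open>N\<^sup>2/4 + O(N)\<close> elements and the redundancy tends to 2.
\<close>

lemma mem_D_CNA:
  "x \<in> D_CNA N1 N2 \<longleftrightarrow>
     x < N1 \<or> (\<exists>j<N2. x = j * (N1 + 1) + N1) \<or> ((N1 + 1) * N2 \<le> x \<and> x < (N1 + 1) * N2 + N1)"
proof -
  have "x \<in> (\<lambda>y. y + (N1 + 1) * N2) ` D1 N1 \<longleftrightarrow> (N1 + 1) * N2 \<le> x \<and> x < (N1 + 1) * N2 + N1"
  proof
    assume "(N1 + 1) * N2 \<le> x \<and> x < (N1 + 1) * N2 + N1"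
    then show "x \<in> (\<lambda>y. y + (N1 + 1) * N2) ` D1 N1"
      unfolding D1_def by (intro image_eqI[where x = "x - (N1 + 1) * N2"]) auto
  qed (auto simp: D1_def)
  then show ?thesis
    unfolding D_CNA_def Un_iff by (auto simp: D1_def D2_def)
qed

lemma finite_D2: "finite (D2 N1 N2)"
  and card_D2: "card (D2 N1 N2) = N2"
proof -
  have D2_eq: "D2 N1 N2 = (\<lambda>j. j * (N1 + 1)) ` {..<N2}"
    unfolding D2_def by auto
  show "finite (D2 N1 N2)"
    unfolding D2_eq by simp
  have "inj (\<lambda>j. j * (N1 + 1))"
    by (rule injI) (metis mult_right_cancel add_is_0 one_neq_zero)
  then show "card (D2 N1 N2) = N2"
    unfolding D2_eq by (simp add: card_image inj_on_subset)
qed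

lemma finite_D_CNA: "finite (D_CNA N1 N2)"
  unfolding D_CNA_def D1_def using finite_D2 by simp

lemma card_D_CNA:
  assumes "N2 \<ge> 1"
  shows "card (D_CNA N1 N2) = 2 * N1 + N2"
proof -
  let ?B = "(\<lambda>x. x + N1) ` D2 N1 N2" and ?C = "(\<lambda>x. x + (N1 + 1) * N2) ` D1 N1"
  have B_range: "N1 \<le> x \<and> x < (N1 + 1) * N2" if "x \<in> ?B" for x
  proof -
    from that obtain j where "j < N2" "x = j * (N1 + 1) + N1"
      unfolding D2_def by auto
    moreover have "(j + 1) * (N1 + 1) \<le> N2 * (N1 + 1)"
      using \<open>j < N2\<close> by (intro mult_le_mono1) simp
    ultimately show ?thesis by (simp add: mult.commute)
  qed
  have "N1 \<le> (N1 + 1) * N2"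
    using assms by (metis le_add1 mult.right_neutral mult_le_mono)
  then have "D1 N1 \<inter> ?C = {}" and "?B \<inter> ?C = {}" and "D1 N1 \<inter> ?B = {}"
    using B_range by (force simp: D1_def)+
  then have "card (D_CNA N1 N2) = card (D1 N1) + card ?B + card ?C"
    unfolding D_CNA_def using finite_D2
    by (simp add: D1_def card_Un_disjoint Int_Un_distrib2)
  also have "\<dots> = 2 * N1 + N2"
    using card_D2 by (simp add: D1_def card_image)
  finally show ?thesis .
qed

lemma D_CNA_cases:
  assumes "x \<in> D_CNA N1 N2"
  obtains "x < N1"
    | j where "j < N2" "x = j * (N1 + 1) + N1"
    | r where "r < N1" "x = (N1 + 1) * N2 + r"
proof -
  consider "x < N1" | "\<exists>j<N2. x = j * (N1 + 1) + N1" | "(N1 + 1) * N2 \<le> x \<and> x < (N1 + 1) * N2 + N1"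
    using assms unfolding mem_D_CNA by blast
  then show ?thesis
  proof cases
    case 3
    then show ?thesis
      using that(3)[of "x - (N1 + 1) * N2"] by linarith
  qed (use that in blast)+
qed

lemma D_CNA_le:
  assumes "x \<in> D_CNA N1 N2"
  shows "x \<le> (N1 + 1) * N2 + N1 - 1"
  using assms
proof (cases rule: D_CNA_cases)
  case (2 j)
  have "(j + 1) * (N1 + 1) \<le> N2 * (N1 + 1)"
    using \<open>j < N2\<close> by (intro mult_le_mono1) simp
  then show ?thesis
    using 2 by (simp add: mult.commute)
qed auto

lemma top_mem_D_CNA:
  assumes "N2 \<ge> 1"
  shows "(N1 + 1) * N2 + N1 - 1 \<in> D_CNA N1 N2"
proof (cases "N1 = 0")
  case True
  then show ?thesis
    using assms unfolding mem_D_CNA by (auto intro!: exI[of _ "N2 - 1"])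
next
  case False
  then have "(N1 + 1) * N2 \<le> (N1 + 1) * N2 + N1 - 1 \<and> (N1 + 1) * N2 + N1 - 1 < (N1 + 1) * N2 + N1"
    by linarith
  then show ?thesis
    unfolding mem_D_CNA by blast
qed

lemma Max_D_CNA:
  assumes "N2 \<ge> 1"
  shows "Max (D_CNA N1 N2) = (N1 + 1) * N2 + N1 - 1"
  using finite_D_CNA D_CNA_le top_mem_D_CNA[OF assms] by (intro Max_eqI)

lemma atMost_subset_D_CNA:
  assumes "N2 \<ge> 1"
  shows "{..N1} \<subseteq> D_CNA N1 N2"
proof (rule subsetI)
  fix x assume "x \<in> {..N1}"
  then have "x < N1 \<or> x = 0 * (N1 + 1) + N1"
    by auto
  with assms show "x \<in> D_CNA N1 N2"
    unfolding mem_D_CNA by (auto intro: exI[of _ 0])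
qed

lemma D_CNA_reflect:
  assumes "x \<in> D_CNA N1 N2"
  shows "(N1 + 1) * N2 + N1 - 1 - x \<in> D_CNA N1 N2"
  using assms
proof (cases rule: D_CNA_cases)
  case (2 j)
  then obtain k where "N2 = j + 1 + k"
    using less_imp_Suc_add by fastforce
  with 2 have "(N1 + 1) * N2 + N1 - 1 - x = k * (N1 + 1) + N1"
    by (simp add: algebra_simps)
  moreover have "k < N2"
    using \<open>N2 = j + 1 + k\<close> by simp
  ultimately show ?thesis
    unfolding mem_D_CNA by blast
qed (auto simp: mem_D_CNA)

lemma D_CNA_gap:
  assumes "N2 \<ge> 1" and "t \<le> (N1 + 1) * N2 + N1 - 1"
  obtains s where "s \<in> D_CNA N1 N2" "s \<le> t" "t \<le> s + N1"
proof (cases "t < N1")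
  case True
  then show ?thesis
    using that[of t] by (simp add: mem_D_CNA)
next
  case False
  define j where "j = (t - N1) div (N1 + 1)"
  have "(N1 + 1) * N2 \<ge> 1"
    using assms(1) by simp
  then have "t - N1 < (N1 + 1) * N2"
    using assms(2) False by linarith
  then have "j < N2"
    unfolding j_def by (simp add: div_less_iff_less_mult mult.commute)
  moreover have "j * (N1 + 1) \<le> t - N1" and "t - N1 < j * (N1 + 1) + (N1 + 1)"
    unfolding j_def using div_mult_mod_eq[of "t - N1" "N1 + 1"] mod_less_divisor[of "N1 + 1" "t - N1"]
    by linarith+
  ultimately show ?thesis
    using False by (intro that[of "j * (N1 + 1) + N1"]) (auto simp: mem_D_CNA)
qed

lemma sumset_D_CNA:
  assumes "N2 \<ge> 1"
  shows "sumset (D_CNA N1 N2) (D_CNA N1 N2) = {0 .. 2 * Max (D_CNA N1 N2)}"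
proof -
  define S where "S = D_CNA N1 N2"
  define M where "M = (N1 + 1) * N2 + N1 - 1"
  have lower_half: "t \<in> sumset S S" if "t \<le> M" for t
  proof -
    obtain s where "s \<in> S" "s \<le> t" "t \<le> s + N1"
      using D_CNA_gap[OF assms] \<open>t \<le> M\<close> unfolding S_def M_def by metis
    moreover have "t - s \<in> S"
      using atMost_subset_D_CNA[OF assms, of N1] \<open>t \<le> s + N1\<close> unfolding S_def by auto
    ultimately show ?thesis
      unfolding sumset_def by force
  qed
  have "t \<in> sumset S S" if "t \<le> 2 * M" for t
  proof (cases "t \<le> M")
    case False
    then have "2 * M - t \<le> M"
      by linarith
    then obtain a b where "a \<in> S" "b \<in> S" "2 * M - t = a + b"
      using lower_half unfolding sumset_def by blast
    moreover from this have "a \<le> M" "b \<le> M"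
      using D_CNA_le unfolding S_def M_def by blast+
    ultimately have "M - a \<in> S" "M - b \<in> S" "t = (M - a) + (M - b)"
      using D_CNA_reflect \<open>t \<le> 2 * M\<close> unfolding S_def M_def by auto
    then show ?thesis
      unfolding sumset_def by blast
  qed (rule lower_half)
  moreover have "a + b \<le> 2 * M" if "a \<in> S" "b \<in> S" for a b
    using that unfolding S_def M_def by (auto dest!: D_CNA_le)
  ultimately have "sumset S S = {0 .. 2 * M}"
    unfolding sumset_def by auto
  then show ?thesis
    unfolding S_def M_def Max_D_CNA[OF assms] .
qed

lemma card_sumset_D_CNA:
  assumes "N2 \<ge> 1"
  shows "real (card (sumset (D_CNA N1 N2) (D_CNA N1 N2))) = 2 * (real N1 + 1) * real N2 + 2 * real N1 - 1"
proof -
  have "(N1 + 1) * N2 \<ge> 1"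
    using assms by simp
  then show ?thesis
    unfolding sumset_D_CNA[OF assms] Max_D_CNA[OF assms] by (simp add: algebra_simps)
qed

lemma alpha_eq: "alpha N = (if N mod 4 = 3 then -1 else int (N mod 4))"
proof -
  have "N mod 4 < 4"
    by simp
  then consider "N mod 4 = 0" | "N mod 4 = 1" | "N mod 4 = 2" | "N mod 4 = 3"
    by linarith
  then show ?thesis
    by cases (simp_all add: alpha_def)
qed

lemma alpha_range: "alpha N \<in> {-1, 0, 1, 2}"
  unfolding alpha_eq by auto

lemma four_dvd_diff_alpha: "4 dvd (int N - alpha N)"
  unfolding alpha_eq by presburger

lemma two_dvd_add_alpha: "2 dvd (int N + alpha N)"
  unfolding alpha_eq by presburger

lemma N1star_nonneg: "N1star N \<ge> 0"
  unfolding N1star_def alpha_eq by presburger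

lemma N2star_pos:
  assumes "N \<ge> 1"
  shows "N2star N \<ge> 1"
  using assms unfolding N2star_def alpha_eq by presburger

lemma Sstar_eq_D_CNA:
  assumes "N \<ge> 1"
  obtains n1 n2 where "Sstar N = D_CNA n1 n2" "n2 \<ge> 1" "N = 2 * n1 + n2" "alpha N = int n2 - 2 * int n1"
proof
  define n1 where "n1 = nat (N1star N)"
  define n2 where "n2 = nat (N2star N)"
  have "int n1 = N1star N" "int n2 = N2star N"
    unfolding n1_def n2_def using N1star_nonneg N2star_pos[OF assms] by simp_all
  then have "4 * int n1 = int N - alpha N" "2 * int n2 = int N + alpha N"
    unfolding N1star_def N2star_def using four_dvd_diff_alpha two_dvd_add_alpha by simp_all
  then show "N = 2 * n1 + n2" "alpha N = int n2 - 2 * int n1"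
    by linarith+
  show "Sstar N = D_CNA n1 n2"
    unfolding Sstar_def n1_def n2_def ..
  show "n2 \<ge> 1"
    unfolding n2_def using N2star_pos[OF assms] by simp
qed

lemma card_sumset_Sstar:
  assumes "N \<ge> 1"
  shows "real (card (sumset (Sstar N) (Sstar N)))
    = (real N ^ 2 + 6 * real N - 7) / 4 - (real_of_int (alpha N) - 1) ^ 2 / 4 + 1"
proof -
  obtain n1 n2 where S: "Sstar N = D_CNA n1 n2" and "n2 \<ge> 1" and N: "N = 2 * n1 + n2"
    and "alpha N = int n2 - 2 * int n1"
    using Sstar_eq_D_CNA[OF assms] .
  then have alpha_real: "real_of_int (alpha N) = real n2 - 2 * real n1"
    by simp
  show ?thesis
    unfolding S card_sumset_D_CNA[OF \<open>n2 \<ge> 1\<close>] alpha_real by (simp add: N power2_eq_square field_simps)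
qed

lemma redundancy_tendsto: "redundancy \<longlonglongrightarrow> 2"
proof (rule tendsto_sandwich)
  let ?lower = "\<lambda>N. 2 * real N * (real N + 1) / (real N ^ 2 + 6 * real N - 3)"
  let ?upper = "\<lambda>N. 2 * real N * (real N + 1) / (real N ^ 2 + 6 * real N - 7)"
  show "?lower \<longlonglongrightarrow> 2" "?upper \<longlonglongrightarrow> 2"
    by real_asymp+
  have "?lower N \<le> redundancy N \<and> redundancy N \<le> ?upper N" if "N \<ge> 2" for N
  proof -
    define c where "c = 4 * real (card (sumset (Sstar N) (Sstar N)))"
    define e where "e = (real_of_int (alpha N) - 1) ^ 2"
    have "0 \<le> e" "e \<le> 4"
      using alpha_range[of N] unfolding e_def by auto
    moreover have "c = real N ^ 2 + 6 * real N - 3 - e"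
      unfolding c_def e_def using card_sumset_Sstar[of N] that by (simp add: field_simps)
    moreover have "real N \<ge> 2"
      using that by simp
    ultimately have pos: "0 < real N ^ 2 + 6 * real N - 7" and "real N ^ 2 + 6 * real N - 7 \<le> c"
      and "c \<le> real N ^ 2 + 6 * real N - 3"
      using zero_le_power2[of "real N"] by linarith+
    moreover have "redundancy N = 2 * real N * (real N + 1) / c"
      using pos \<open>real N ^ 2 + 6 * real N - 7 \<le> c\<close> unfolding redundancy_def c_def
      by (simp add: field_simps)
    ultimately show ?thesis
      by (auto intro!: frac_le)
  qed
  then show "\<forall>\<^sub>F N in sequentially. ?lower N \<le> redundancy N"
    "\<forall>\<^sub>F N in sequentially. redundancy N \<le> ?upper N"
    by (auto simp: eventually_at_top_linorder)
qed

theorem mainTheorem5: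
  shows "(\<forall>N::nat. N \<ge> 1 \<longrightarrow>
            4 dvd (int N - alpha N) \<and> 2 dvd (int N + alpha N)
          \<and> N1star N \<ge> 0 \<and> N2star N \<ge> 1
          \<and> card (Sstar N) = N
          \<and> sumset (Sstar N) (Sstar N) = {0 .. 2 * Max (Sstar N)}
          \<and> real (card (sumset (Sstar N) (Sstar N)))
              = (real N ^ 2 + 6 * real N - 7) / 4 - (real_of_int (alpha N) - 1) ^ 2 / 4 + 1)
        \<and> (redundancy \<longlonglongrightarrow> 2)"
proof (intro conjI allI impI)
  fix N :: nat
  assume "N \<ge> 1"
  then obtain n1 n2 where "Sstar N = D_CNA n1 n2" and "n2 \<ge> 1" and "N = 2 * n1 + n2"
    using Sstar_eq_D_CNA by metis
  then show "card (Sstar N) = N" "sumset (Sstar N) (Sstar N) = {0 .. 2 * Max (Sstar N)}"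
    by (simp_all add: card_D_CNA sumset_D_CNA)
  show "real (card (sumset (Sstar N) (Sstar N)))
      = (real N ^ 2 + 6 * real N - 7) / 4 - (real_of_int (alpha N) - 1) ^ 2 / 4 + 1"
    using card_sumset_Sstar[OF \<open>N \<ge> 1\<close>] .
  show "N2star N \<ge> 1"
    using N2star_pos[OF \<open>N \<ge> 1\<close>] .
qed (rule four_dvd_diff_alpha two_dvd_add_alpha N1star_nonneg redundancy_tendsto)+

end
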